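(* There is no finitely generated partially commutative group $G$ with $\mathrm{cdim}(G)=3$.
   Context: A finitely generated partially commutative group is a group $G(\Gamma)=\langle X\mid [a,b]=1 \text{ whenever } a,b \text{ are joined by an edge of }\Gamma\rangle$ for a finite simple undirected graph $\Gamma$ with vertex set $X$, where $[a,b]=a^{-1}b^{-1}ab$. The centraliser dimension $\mathrm{cdim}(H)$ of a group $H$ is the maximal length $k$ of a chain $C_0>C_1>\cdots>C_k$ (strict inclusions) of centralisers of subsets of $H$. *)

theory Defs
  imports "HOL-Algebra.Group"
begin

definition fin_simple_graph :: "'a set \<Rightarrow> ('a \<Rightarrow> 'a \<Rightarrow> bool) \<Rightarrow> bool" where
  "fin_simple_graph V E \<longleftrightarrow> finite V \<and> (\<forall>a b. E a b \<longrightarrow> E b a) \<and> (\<forall>a. \<not> E a a)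
     \<and> (\<forall>a b. E a b \<longrightarrow> a \<in> V \<and> b \<in> V)"

text \<open>Words in the generators and their inverses: (x, True) is x, (x, False) is x^-1.\<close>
type_synonym 'a word = "('a \<times> bool) list"

definition words_on :: "'a set \<Rightarrow> 'a word set" where
  "words_on V = {w. \<forall>l \<in> set w. fst l \<in> V}"

inductive pc_step :: "('a \<Rightarrow> 'a \<Rightarrow> bool) \<Rightarrow> 'a word \<Rightarrow> 'a word \<Rightarrow> bool" for E where
  cancel: "pc_step E (xs @ [(a, e), (a, \<not> e)] @ ys) (xs @ ys)"
| swap: "E a c \<Longrightarrow> pc_step E (xs @ [(a, e), (c, d)] @ ys) (xs @ [(c, d), (a, e)] @ ys)"

definition pc_rel :: "'a set \<Rightarrow> ('a \<Rightarrow> 'a \<Rightarrow> bool) \<Rightarrow> ('a word \<times> 'a word) set" where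
  "pc_rel V E = ({(u, v). u \<in> words_on V \<and> v \<in> words_on V \<and> (pc_step E u v \<or> pc_step E v u)})\<^sup>*
                 \<inter> (words_on V \<times> words_on V)"

definition pc_group :: "'a set \<Rightarrow> ('a \<Rightarrow> 'a \<Rightarrow> bool) \<Rightarrow> 'a word set monoid" where
  "pc_group V E =
     \<lparr> carrier = words_on V // pc_rel V E,
       mult = (\<lambda>A B. \<Union>u\<in>A. \<Union>v\<in>B. pc_rel V E `` {u @ v}),
       one = pc_rel V E `` {[]} \<rparr>"

definition centraliser :: "('g, 'b) monoid_scheme \<Rightarrow> 'g set \<Rightarrow> 'g set" where
  "centraliser H S = {g \<in> carrier H. \<forall>s \<in> S. g \<otimes>\<^bsub>H\<^esub> s = s \<otimes>\<^bsub>H\<^esub> g}"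

definition is_centraliser :: "('g, 'b) monoid_scheme \<Rightarrow> 'g set \<Rightarrow> bool" where
  "is_centraliser H C \<longleftrightarrow> (\<exists>S \<subseteq> carrier H. C = centraliser H S)"

definition has_centraliser_chain :: "('g, 'b) monoid_scheme \<Rightarrow> nat \<Rightarrow> bool" where
  "has_centraliser_chain H k \<longleftrightarrow>
     (\<exists>C :: nat \<Rightarrow> 'g set. (\<forall>i \<le> k. is_centraliser H (C i)) \<and> (\<forall>i < k. C (Suc i) \<subset> C i))"

definition cdim_eq :: "('g, 'b) monoid_scheme \<Rightarrow> nat \<Rightarrow> bool" where
  "cdim_eq H k \<longleftrightarrow> has_centraliser_chain H k \<and> (\<forall>m. has_centraliser_chain H m \<longrightarrow> m \<le> k)"

end

theory Submission
  imports Defs "HOL-Computational_Algebra.Polynomial" "HOL-Library.Countable_Set"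
begin

text \<open>If some vertex b is the middle of an induced path a - b - c and is not adjacent to some
other vertex d, the centralisers of the generator sets {}, {b}, {b, c}, {a, b, c}, {a, b, c, d}
form a strictly decreasing chain of length 4. Otherwise the neighbourhood of every non-universal
vertex is a clique, so the non-universal vertices split into pairwise non-adjacent cliques and G is
the direct product of the free abelian group on the universal vertices, which is central, with a
free product of free abelian groups. Such a group is commutative transitive modulo its centre, and
this leaves no room for a chain of length 3.

Commutative transitivity is read off a representation into 2 x 2 matrices over Z[t]: the
generators of the clique with label i go to unipotent matrices fixing (i, 1). A ping-pong argument
on degrees shows that, together with the exponent sums, the representation separates elements,
and commuting with a fixed non-scalar 2 x 2 matrix over a domain is a transitive relation.\<close>

section \<open>Words and their equivalence\<close>

lemma words_on_Nil [simp]: "[] \<in> words_on V"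
  by (simp add: words_on_def)

lemma words_on_Cons [simp]: "l # w \<in> words_on V \<longleftrightarrow> fst l \<in> V \<and> w \<in> words_on V"
  by (simp add: words_on_def)

lemma words_on_append [simp]: "u @ w \<in> words_on V \<longleftrightarrow> u \<in> words_on V \<and> w \<in> words_on V"
  by (auto simp: words_on_def)

definition pc_move :: "'a set \<Rightarrow> ('a \<Rightarrow> 'a \<Rightarrow> bool) \<Rightarrow> ('a word \<times> 'a word) set" where
  "pc_move V E = {(u, v). u \<in> words_on V \<and> v \<in> words_on V \<and> (pc_step E u v \<or> pc_step E v u)}"

lemma pc_rel_eq_pc_move: "pc_rel V E = (pc_move V E)\<^sup>* \<inter> (words_on V \<times> words_on V)"
  by (simp add: pc_rel_def pc_move_def)

lemma equiv_pc_rel: "equiv (words_on V) (pc_rel V E)"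
proof (rule equivI)
  have "sym (pc_move V E)"
    by (auto simp: pc_move_def sym_def)
  then show "sym (pc_rel V E)"
    using sym_rtrancl[of "pc_move V E"] by (auto simp: pc_rel_eq_pc_move sym_def)
qed (auto simp: pc_rel_eq_pc_move refl_on_def trans_def)

lemma pc_rel_refl: "u \<in> words_on V \<Longrightarrow> (u, u) \<in> pc_rel V E"
  by (simp add: pc_rel_eq_pc_move)

lemma pc_rel_sym: "(u, v) \<in> pc_rel V E \<Longrightarrow> (v, u) \<in> pc_rel V E"
  using equiv_pc_rel by (metis equivE symD)

lemma pc_rel_trans: "(u, v) \<in> pc_rel V E \<Longrightarrow> (v, w) \<in> pc_rel V E \<Longrightarrow> (u, w) \<in> pc_rel V E"
  using equiv_pc_rel by (metis equivE transD)

lemma pc_rel_words_on: "(u, v) \<in> pc_rel V E \<Longrightarrow> u \<in> words_on V \<and> v \<in> words_on V"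
  by (simp add: pc_rel_eq_pc_move)

lemma pc_step_in_pc_rel:
  "pc_step E u v \<Longrightarrow> u \<in> words_on V \<Longrightarrow> v \<in> words_on V \<Longrightarrow> (u, v) \<in> pc_rel V E"
  by (auto simp: pc_rel_eq_pc_move pc_move_def)

lemma pc_rel_cancel: "a \<in> V \<Longrightarrow> ([(a, e), (a, \<not> e)], []) \<in> pc_rel V E"
  using pc_step.cancel[of E "[]" a e "[]"] by (auto intro: pc_step_in_pc_rel)

lemma pc_rel_swap: "E a c \<Longrightarrow> a \<in> V \<Longrightarrow> c \<in> V \<Longrightarrow> ([(a, e), (c, d)], [(c, d), (a, e)]) \<in> pc_rel V E"
  using pc_step.swap[of E a c "[]" e d "[]"] by (auto intro: pc_step_in_pc_rel)

lemma pc_step_append_context: "pc_step E u v \<Longrightarrow> pc_step E (x @ u @ y) (x @ v @ y)"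
proof (induction rule: pc_step.induct)
  case (cancel xs a e ys)
  then show ?case using pc_step.cancel[of E "x @ xs" a e "ys @ y"] by simp
next
  case (swap a c xs e d ys)
  then show ?case using pc_step.swap[of E a c "x @ xs" e d "ys @ y"] by simp
qed

lemma pc_rel_append_context:
  assumes "(u, v) \<in> pc_rel V E" "x \<in> words_on V" "y \<in> words_on V"
  shows "(x @ u @ y, x @ v @ y) \<in> pc_rel V E"
proof -
  have "(u, v) \<in> (pc_move V E)\<^sup>*"
    using assms(1) by (simp add: pc_rel_eq_pc_move)
  then have "(x @ u @ y, x @ v @ y) \<in> (pc_move V E)\<^sup>*"
  proof (induction rule: rtrancl_induct)
    case (step v w)
    then have "(x @ v @ y, x @ w @ y) \<in> pc_move V E"
      using assms(2,3) by (auto simp: pc_move_def intro: pc_step_append_context)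
    with step.IH show ?case by simp
  qed simp
  then show ?thesis
    using assms pc_rel_words_on[OF assms(1)] by (simp add: pc_rel_eq_pc_move)
qed

lemma pc_rel_append:
  assumes "(u, u') \<in> pc_rel V E" "(v, v') \<in> pc_rel V E"
  shows "(u @ v, u' @ v') \<in> pc_rel V E"
proof -
  have "(u @ v, u' @ v) \<in> pc_rel V E"
    using pc_rel_append_context[OF assms(1), of "[]" v] pc_rel_words_on[OF assms(2)] by simp
  moreover have "(u' @ v, u' @ v') \<in> pc_rel V E"
    using pc_rel_append_context[OF assms(2), of u' "[]"] pc_rel_words_on[OF assms(1)] by simp
  ultimately show ?thesis by (rule pc_rel_trans)
qed

lemma pc_rel_invariant:
  assumes "\<And>u v. pc_step E u v \<Longrightarrow> \<phi> u = \<phi> v" and "(u, v) \<in> pc_rel V E"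
  shows "\<phi> u = \<phi> v"
proof -
  have "(u, v) \<in> (pc_move V E)\<^sup>*"
    using assms(2) by (simp add: pc_rel_eq_pc_move)
  then show ?thesis
    by (induction rule: rtrancl_induct) (auto simp: pc_move_def dest: assms(1))
qed

lemma prod_list_map_pc_rel:
  fixes f :: "'a \<times> bool \<Rightarrow> 'm::monoid_mult"
  assumes inverse: "\<And>a e. f (a, e) * f (a, \<not> e) = 1"
    and commute: "\<And>a c e d. E a c \<Longrightarrow> f (a, e) * f (c, d) = f (c, d) * f (a, e)"
    and "(u, v) \<in> pc_rel V E"
  shows "prod_list (map f u) = prod_list (map f v)"
proof (rule pc_rel_invariant[OF _ assms(3)])
  fix u v assume "pc_step E u v"
  then show "prod_list (map f u) = prod_list (map f v)"
  proof (cases rule: pc_step.cases)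
    case (cancel xs a e ys)
    then show ?thesis by (simp add: inverse flip: mult.assoc)
  next
    case (swap a c xs e d ys)
    have "f (a, e) * (f (c, d) * x) = f (c, d) * (f (a, e) * x)" for x
      using commute[OF \<open>E a c\<close>] by (metis mult.assoc)
    with swap show ?thesis by (simp add: mult.assoc)
  qed
qed

definition exp_sum :: "'a word \<Rightarrow> 'a \<Rightarrow> int" where
  "exp_sum w a = int (count_list w (a, True)) - int (count_list w (a, False))"

lemma exp_sum_Nil [simp]: "exp_sum [] a = 0"
  by (simp add: exp_sum_def)

lemma exp_sum_Cons: "exp_sum (l # w) a = (if fst l = a then (if snd l then 1 else -1) else 0) + exp_sum w a"
  by (cases l) (auto simp: exp_sum_def)

lemma exp_sum_append: "exp_sum (u @ w) a = exp_sum u a + exp_sum w a"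
  by (simp add: exp_sum_def)

lemma exp_sum_pc_rel: "(u, v) \<in> pc_rel V E \<Longrightarrow> exp_sum u = exp_sum v"
  by (rule pc_rel_invariant) (auto elim!: pc_step.cases simp: fun_eq_iff exp_sum_append exp_sum_Cons)

lemma exp_sum_nonzero_occurs: "exp_sum w a \<noteq> 0 \<Longrightarrow> \<exists>l\<in>set w. fst l = a"
  by (induction w) (auto simp: exp_sum_Cons split: if_splits)

definition word_inv :: "'a word \<Rightarrow> 'a word" where
  "word_inv w = rev (map (\<lambda>(a, e). (a, \<not> e)) w)"

lemma word_inv_words_on: "w \<in> words_on V \<Longrightarrow> word_inv w \<in> words_on V"
  by (auto simp: word_inv_def words_on_def)

lemma word_inv_word_inv [simp]: "word_inv (word_inv w) = w"
  by (simp add: word_inv_def rev_map comp_def case_prod_beta)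

lemma exp_sum_word_inv: "exp_sum (word_inv w) a = - exp_sum w a"
  by (induction w) (auto simp: word_inv_def exp_sum_append exp_sum_Cons)

lemma pc_rel_append_word_inv: "w \<in> words_on V \<Longrightarrow> (w @ word_inv w, []) \<in> pc_rel V E"
proof (induction w)
  case (Cons l w)
  obtain a e where l: "l = (a, e)" by (cases l)
  have "([l] @ (w @ word_inv w) @ [(a, \<not> e)], [l] @ [] @ [(a, \<not> e)]) \<in> pc_rel V E"
    using Cons l by (intro pc_rel_append_context) (auto simp: word_inv_def)
  moreover have "([(a, e), (a, \<not> e)], []) \<in> pc_rel V E"
    using Cons l by (intro pc_rel_cancel) auto
  ultimately show ?case
    using l by (auto simp: word_inv_def intro: pc_rel_trans)
qed (simp add: word_inv_def pc_rel_refl)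

lemma pc_rel_word_inv_append: "w \<in> words_on V \<Longrightarrow> (word_inv w @ w, []) \<in> pc_rel V E"
  using pc_rel_append_word_inv[of "word_inv w"] word_inv_words_on by fastforce

abbreviation pc_class :: "'a set \<Rightarrow> ('a \<Rightarrow> 'a \<Rightarrow> bool) \<Rightarrow> 'a word \<Rightarrow> 'a word set" where
  "pc_class V E u \<equiv> pc_rel V E `` {u}"

lemma pc_class_in_carrier: "u \<in> words_on V \<Longrightarrow> pc_class V E u \<in> carrier (pc_group V E)"
  by (auto simp: pc_group_def quotient_def)

lemma pc_group_carrierE:
  assumes "X \<in> carrier (pc_group V E)"
  obtains u where "u \<in> words_on V" "X = pc_class V E u"
  using assms by (auto simp: pc_group_def quotient_def)

lemma pc_class_eq_iff:
  "u \<in> words_on V \<Longrightarrow> v \<in> words_on V \<Longrightarrow> pc_class V E u = pc_class V E v \<longleftrightarrow> (u, v) \<in> pc_rel V E"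
  by (rule eq_equiv_class_iff[OF equiv_pc_rel])

lemma pc_class_mult:
  assumes "u \<in> words_on V" "v \<in> words_on V"
  shows "pc_class V E u \<otimes>\<^bsub>pc_group V E\<^esub> pc_class V E v = pc_class V E (u @ v)"
proof -
  have "pc_class V E (u' @ v') = pc_class V E (u @ v)"
    if "u' \<in> pc_class V E u" "v' \<in> pc_class V E v" for u' v'
  proof (rule equiv_class_eq[OF equiv_pc_rel])
    show "(u' @ v', u @ v) \<in> pc_rel V E"
      using that by (auto intro: pc_rel_sym pc_rel_append)
  qed
  moreover have "u \<in> pc_class V E u" "v \<in> pc_class V E v"
    using assms by (auto intro: pc_rel_refl)
  ultimately have "(\<Union>u'\<in>pc_class V E u. \<Union>v'\<in>pc_class V E v. pc_class V E (u' @ v')) = pc_class V E (u @ v)"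
    by blast
  then show ?thesis
    by (simp add: pc_group_def)
qed

lemma pc_class_commute_iff:
  assumes "u \<in> words_on V" "v \<in> words_on V"
  shows "pc_class V E u \<otimes>\<^bsub>pc_group V E\<^esub> pc_class V E v = pc_class V E v \<otimes>\<^bsub>pc_group V E\<^esub> pc_class V E u
     \<longleftrightarrow> (u @ v, v @ u) \<in> pc_rel V E"
  using assms by (simp add: pc_class_mult pc_class_eq_iff)

definition clique :: "('a \<Rightarrow> 'a \<Rightarrow> bool) \<Rightarrow> 'a set \<Rightarrow> bool" where
  "clique E A \<longleftrightarrow> (\<forall>a\<in>A. \<forall>b\<in>A. a = b \<or> E a b)"

lemma pc_rel_move_letter:
  assumes "fst l \<in> V" "m \<in> words_on V" "\<forall>l'\<in>set m. l' = l \<or> E (fst l) (fst l')"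
  shows "(l # m, m @ [l]) \<in> pc_rel V E"
  using assms(2,3)
proof (induction m)
  case (Cons l' m)
  have "([l, l'] @ m, [l', l] @ m) \<in> pc_rel V E"
  proof (cases "l' = l")
    case False
    then have "([l, l'], [l', l]) \<in> pc_rel V E"
      using Cons.prems assms(1) by (cases l, cases l') (auto intro: pc_rel_swap)
    then show ?thesis
      using Cons.prems by (intro pc_rel_append) (auto intro: pc_rel_refl)
  qed (use Cons.prems assms(1) in \<open>auto intro: pc_rel_refl\<close>)
  moreover have "([l'] @ (l # m) @ [], [l'] @ (m @ [l]) @ []) \<in> pc_rel V E"
    using Cons by (intro pc_rel_append_context) auto
  ultimately show ?case
    using pc_rel_trans by fastforce
qed (use assms(1) in \<open>auto intro: pc_rel_refl\<close>)

text \<open>In a clique all letters commute, so each letter can be moved next to an inverse and cancelled.\<close>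
lemma pc_rel_Nil_if_clique:
  assumes "w \<in> words_on V" "clique E (fst ` set w)" "\<forall>a. exp_sum w a = 0"
  shows "(w, []) \<in> pc_rel V E"
  using assms
proof (induction "length w" arbitrary: w rule: less_induct)
  case less
  show ?case
  proof (cases w)
    case (Cons l w')
    obtain a e where l: "l = (a, e)" by (cases l)
    have "exp_sum w a = 0"
      using less.prems(3) by simp
    then have "(a, \<not> e) \<in> set w'"
      using Cons l count_list_0_iff[of w' "(a, \<not> e)"] by (cases e) (auto simp: exp_sum_def)
    then obtain m q where w': "w' = m @ (a, \<not> e) # q" and m: "(a, \<not> e) \<notin> set m"
      by (meson split_list_first)
    have w_words: "a \<in> V" "m \<in> words_on V" "q \<in> words_on V"
      using less.prems(1) Cons w' l by auto
    have "\<forall>l'\<in>set m. l' = l \<or> E a (fst l')"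
    proof
      fix l' assume "l' \<in> set m"
      then have "fst l' = a \<or> E a (fst l')"
        using less.prems(2) by (auto simp: clique_def Cons w' l)
      with m \<open>l' \<in> set m\<close> show "l' = l \<or> E a (fst l')"
        by (cases l'; cases e; cases "snd l'") (auto simp: l)
    qed
    then have "(l # m, m @ [l]) \<in> pc_rel V E"
      using w_words l by (intro pc_rel_move_letter) auto
    then have "([] @ (l # m) @ (a, \<not> e) # q, [] @ (m @ [l]) @ (a, \<not> e) # q) \<in> pc_rel V E"
      using w_words by (intro pc_rel_append_context) auto
    then have move: "(w, m @ [(a, e), (a, \<not> e)] @ q) \<in> pc_rel V E"
      using Cons w' l by simp
    have cancel: "(m @ [(a, e), (a, \<not> e)] @ q, m @ q) \<in> pc_rel V E"
      using pc_rel_append_context[OF pc_rel_cancel] w_words by fastforce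
    have shorter: "(m @ q, []) \<in> pc_rel V E"
    proof (rule less.hyps)
      show "\<forall>b. exp_sum (m @ q) b = 0"
      proof
        fix b
        have "exp_sum w b = 0"
          using less.prems(3) by simp
        then show "exp_sum (m @ q) b = 0"
          using Cons w' l by (cases e) (auto simp: exp_sum_append exp_sum_Cons split: if_splits)
      qed
      show "clique E (fst ` set (m @ q))"
        using less.prems(2) by (auto simp: clique_def Cons w')
    qed (use w_words Cons w' in auto)
    show ?thesis
      using pc_rel_trans[OF pc_rel_trans[OF move cancel] shorter] by simp
  qed (simp add: pc_rel_refl)
qed

section \<open>Two by two matrices\<close>

datatype 'r mat2 = Mat2 'r 'r 'r 'r

instantiation mat2 :: (comm_ring_1) monoid_mult
begin

fun times_mat2 :: "'a mat2 \<Rightarrow> 'a mat2 \<Rightarrow> 'a mat2" where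
  "Mat2 a b c d * Mat2 a' b' c' d' =
     Mat2 (a * a' + b * c') (a * b' + b * d') (c * a' + d * c') (c * b' + d * d')"

definition one_mat2 :: "'a mat2" where
  "1 = Mat2 1 0 0 1"

instance
proof
  fix A B C :: "'a mat2"
  show "A * B * C = A * (B * C)"
    by (cases A; cases B; cases C) (simp add: algebra_simps)
  show "1 * A = A" "A * 1 = A"
    by (cases A; simp add: one_mat2_def)+
qed

end

fun mat2_apply :: "'r::comm_ring_1 mat2 \<Rightarrow> 'r \<times> 'r \<Rightarrow> 'r \<times> 'r" where
  "mat2_apply (Mat2 a b c d) (x, y) = (a * x + b * y, c * x + d * y)"

lemma mat2_apply_mult: "mat2_apply (A * B) v = mat2_apply A (mat2_apply B v)"
  by (cases A; cases B; cases v) (simp add: algebra_simps)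

lemma mat2_apply_one [simp]: "mat2_apply 1 v = v"
  by (cases v) (simp add: one_mat2_def)

fun proportional :: "'r::comm_ring_1 \<times> 'r \<times> 'r \<Rightarrow> 'r \<times> 'r \<times> 'r \<Rightarrow> bool" where
  "proportional (u1, u2, u3) (v1, v2, v3) \<longleftrightarrow> u1 * v2 = u2 * v1 \<and> u1 * v3 = u3 * v1 \<and> u2 * v3 = u3 * v2"

lemma proportional_zero: "proportional (0, 0, 0) v"
  by (cases v) auto

lemma proportional_trans:
  fixes u v w :: "'r::idom \<times> 'r \<times> 'r"
  assumes "proportional u w" "proportional w v" "w \<noteq> (0, 0, 0)"
  shows "proportional u v"
proof -
  obtain u1 u2 u3 v1 v2 v3 w1 w2 w3
    where uvw: "u = (u1, u2, u3)" "v = (v1, v2, v3)" "w = (w1, w2, w3)"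
    by (cases u; cases v; cases w) auto
  have "wi * wi * (u1 * v2 - u2 * v1) = 0 \<and> wi * wi * (u1 * v3 - u3 * v1) = 0
      \<and> wi * wi * (u2 * v3 - u3 * v2) = 0" if "wi \<in> {w1, w2, w3}" for wi
    using assms(1,2) that unfolding uvw by auto algebra+
  then show ?thesis
    using assms(3) unfolding uvw by auto
qed

text \<open>The coordinates of the traceless part of a matrix, up to the factor 2 on the diagonal.\<close>
fun traceless_part :: "'r::comm_ring_1 mat2 \<Rightarrow> 'r \<times> 'r \<times> 'r" where
  "traceless_part (Mat2 a b c d) = (b, c, a - d)"

lemma mat2_commute_iff: "A * B = B * A \<longleftrightarrow> proportional (traceless_part A) (traceless_part B)"
  by (cases A; cases B) (auto simp: algebra_simps)

lemma mat2_commute_trans: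
  fixes A B C :: "'r::idom mat2"
  assumes "A * B = B * A" "B * C = C * B" "traceless_part B \<noteq> (0, 0, 0)"
  shows "A * C = C * A"
  using assms proportional_trans by (simp add: mat2_commute_iff)

section \<open>Centraliser chains\<close>

lemma pc_rel_letters_commute_iff:
  assumes G: "fin_simple_graph V E" and "p \<in> V" "q \<in> V"
  shows "([(p, True), (q, True)], [(q, True), (p, True)]) \<in> pc_rel V E \<longleftrightarrow> p = q \<or> E p q"
proof
  assume rel: "([(p, True), (q, True)], [(q, True), (p, True)]) \<in> pc_rel V E"
  show "p = q \<or> E p q"
  proof (rule ccontr)
    assume pq: "\<not> (p = q \<or> E p q)"
    define f :: "'a \<times> bool \<Rightarrow> int mat2" where
      "f l = (if fst l = p then (if snd l then Mat2 1 1 0 1 else Mat2 1 (-1) 0 1)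
              else if fst l = q then (if snd l then Mat2 1 0 1 1 else Mat2 1 0 (-1) 1) else 1)" for l
    have "prod_list (map f [(p, True), (q, True)]) = prod_list (map f [(q, True), (p, True)])"
    proof (rule prod_list_map_pc_rel[OF _ _ rel])
      show "f (a, e) * f (a, \<not> e) = 1" for a e
        by (simp add: f_def one_mat2_def)
      have "a \<notin> {p, q} \<or> c \<notin> {p, q}" if "E a c" for a c
        using that pq G unfolding fin_simple_graph_def by blast
      moreover have "f l = 1" if "fst l \<notin> {p, q}" for l
        using that by (simp add: f_def)
      ultimately show "f (a, e) * f (c, d) = f (c, d) * f (a, e)" if "E a c" for a c e d
        using that by fastforce
    qed
    with pq show False
      by (auto simp: f_def)
  qed
next
  assume "p = q \<or> E p q"
  then show "([(p, True), (q, True)], [(q, True), (p, True)]) \<in> pc_rel V E"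
    using assms by (auto intro: pc_rel_refl pc_rel_swap)
qed

abbreviation pc_generator :: "'a set \<Rightarrow> ('a \<Rightarrow> 'a \<Rightarrow> bool) \<Rightarrow> 'a \<Rightarrow> 'a word set" where
  "pc_generator V E p \<equiv> pc_class V E [(p, True)]"

lemma pc_generator_in_carrier: "p \<in> V \<Longrightarrow> pc_generator V E p \<in> carrier (pc_group V E)"
  by (simp add: pc_class_in_carrier)

lemma pc_generator_in_centraliser_iff:
  assumes "fin_simple_graph V E" "p \<in> V" "T \<subseteq> V"
  shows "pc_generator V E p \<in> centraliser (pc_group V E) (pc_generator V E ` T)
     \<longleftrightarrow> (\<forall>t\<in>T. p = t \<or> E p t)"
proof -
  have commute_iff: "pc_generator V E p \<otimes>\<^bsub>pc_group V E\<^esub> pc_generator V E t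
      = pc_generator V E t \<otimes>\<^bsub>pc_group V E\<^esub> pc_generator V E p \<longleftrightarrow> p = t \<or> E p t"
    if "t \<in> V" for t
    using pc_class_commute_iff[of "[(p, True)]" V "[(t, True)]" E]
      pc_rel_letters_commute_iff[OF assms(1,2) that] assms(2) that by simp
  have "pc_generator V E p \<in> centraliser (pc_group V E) (pc_generator V E ` T)
      \<longleftrightarrow> (\<forall>t\<in>T. pc_generator V E p \<otimes>\<^bsub>pc_group V E\<^esub> pc_generator V E t
                  = pc_generator V E t \<otimes>\<^bsub>pc_group V E\<^esub> pc_generator V E p)"
    by (simp add: centraliser_def pc_generator_in_carrier[OF assms(2)])
  also have "\<dots> \<longleftrightarrow> (\<forall>t\<in>T. p = t \<or> E p t)"
    using commute_iff assms(3) by blast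
  finally show ?thesis .
qed

lemma centraliser_antimono: "S \<subseteq> S' \<Longrightarrow> centraliser H S' \<subseteq> centraliser H S"
  by (auto simp: centraliser_def)

definition induced_P3_middle :: "('a \<Rightarrow> 'a \<Rightarrow> bool) \<Rightarrow> 'a \<Rightarrow> bool" where
  "induced_P3_middle E b \<longleftrightarrow> (\<exists>a c. E a b \<and> E b c \<and> a \<noteq> c \<and> \<not> E a c)"

definition universal :: "'a set \<Rightarrow> ('a \<Rightarrow> 'a \<Rightarrow> bool) \<Rightarrow> 'a \<Rightarrow> bool" where
  "universal V E b \<longleftrightarrow> (\<forall>d\<in>V. d \<noteq> b \<longrightarrow> E b d)"

lemma has_centraliser_chain_4:
  assumes G: "fin_simple_graph V E" and "induced_P3_middle E b" "\<not> universal V E b"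
  shows "has_centraliser_chain (pc_group V E) 4"
proof -
  obtain a c d where abc: "E a b" "E b c" "a \<noteq> c" "\<not> E a c" and d: "d \<in> V" "d \<noteq> b" "\<not> E b d"
    using assms(2,3) by (auto simp: induced_P3_middle_def universal_def)
  have V: "a \<in> V" "b \<in> V" "c \<in> V" and sym: "E x y \<Longrightarrow> E y x" and irrefl: "\<not> E x x" for x y
    using G abc by (auto simp: fin_simple_graph_def)
  define C where "C i = centraliser (pc_group V E) (pc_generator V E ` set (take i [b, c, a, d]))" for i
  have T: "set (take i [b, c, a, d]) \<subseteq> V" for i
    using set_take_subset[of i "[b, c, a, d]"] V d by auto
  have C: "is_centraliser (pc_group V E) (C i)" for i
  proof -
    have "pc_generator V E ` set (take i [b, c, a, d]) \<subseteq> carrier (pc_group V E)"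
      using T by (auto intro: pc_generator_in_carrier)
    then show ?thesis
      unfolding is_centraliser_def C_def by blast
  qed
  have generator_in_C: "pc_generator V E x \<in> C i \<longleftrightarrow> (\<forall>t\<in>set (take i [b, c, a, d]). x = t \<or> E x t)"
    if "x \<in> V" for x i
    unfolding C_def using pc_generator_in_centraliser_iff[OF G that T] .
  have "C (Suc i) \<subseteq> C i" for i
    unfolding C_def by (intro centraliser_antimono image_mono set_take_subset_set_take) simp
  moreover have "C (Suc i) \<noteq> C i" if "i < 4" for i
  proof -
    have "i \<in> {0, 1, 2, 3}"
      using that by auto
    moreover have "pc_generator V E d \<in> C 0 - C 1" "pc_generator V E a \<in> C 1 - C 2"
      "pc_generator V E c \<in> C 2 - C 3" "pc_generator V E b \<in> C 3 - C 4"
      using abc d V sym irrefl by (auto simp: generator_in_C numeral_eq_Suc)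
    ultimately show ?thesis
      by (auto simp: numeral_eq_Suc)
  qed
  ultimately show ?thesis
    unfolding has_centraliser_chain_def using C by blast
qed

definition commutative_transitive_mod_centre :: "('g, 'b) monoid_scheme \<Rightarrow> bool" where
  "commutative_transitive_mod_centre H \<longleftrightarrow>
     (\<forall>x\<in>carrier H. \<forall>y\<in>carrier H - centraliser H (carrier H). \<forall>z\<in>carrier H.
        x \<otimes>\<^bsub>H\<^esub> y = y \<otimes>\<^bsub>H\<^esub> x \<longrightarrow> y \<otimes>\<^bsub>H\<^esub> z = z \<otimes>\<^bsub>H\<^esub> y \<longrightarrow> x \<otimes>\<^bsub>H\<^esub> z = z \<otimes>\<^bsub>H\<^esub> x)"

lemma commutative_transitive_mod_centreD:
  assumes "commutative_transitive_mod_centre H"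
    and "x \<in> carrier H" "y \<in> carrier H - centraliser H (carrier H)" "z \<in> carrier H"
    and "x \<otimes>\<^bsub>H\<^esub> y = y \<otimes>\<^bsub>H\<^esub> x" "y \<otimes>\<^bsub>H\<^esub> z = z \<otimes>\<^bsub>H\<^esub> y"
  shows "x \<otimes>\<^bsub>H\<^esub> z = z \<otimes>\<^bsub>H\<^esub> x"
  using assms unfolding commutative_transitive_mod_centre_def by blast

lemma centraliser_commute: "g \<in> centraliser H S \<Longrightarrow> s \<in> S \<Longrightarrow> g \<otimes>\<^bsub>H\<^esub> s = s \<otimes>\<^bsub>H\<^esub> g"
  by (simp add: centraliser_def)

lemma centraliser_subset_carrier: "centraliser H S \<subseteq> carrier H"
  by (auto simp: centraliser_def)

lemma not_in_centraliserE:
  assumes "y \<in> carrier H" "y \<notin> centraliser H S"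
  obtains s where "s \<in> S" "s \<notin> centraliser H (carrier H)"
proof -
  obtain s where s: "s \<in> S" "y \<otimes>\<^bsub>H\<^esub> s \<noteq> s \<otimes>\<^bsub>H\<^esub> y"
    using assms by (auto simp: centraliser_def)
  have "s \<notin> centraliser H (carrier H)"
    using s(2) assms(1) unfolding centraliser_def by (metis (mono_tags, lifting) mem_Collect_eq)
  with s(1) show thesis
    by (rule that)
qed

text \<open>As C1 \<noteq> C0, some s \<in> S1 is non-central, and some y \<in> C2 - C3 is non-central. Every x \<in> C1
commutes with s, which commutes with y; so x commutes with y, hence with S2: C1 \<subseteq> C2.\<close>
lemma no_centraliser_chain_3:
  assumes CT: "commutative_transitive_mod_centre H"
  shows "\<not> has_centraliser_chain H 3"
proof
  assume "has_centraliser_chain H 3"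
  then obtain C where C: "\<And>i. i \<le> 3 \<Longrightarrow> is_centraliser H (C i)"
    and chain: "\<And>i. i < 3 \<Longrightarrow> C (Suc i) \<subset> C i"
    unfolding has_centraliser_chain_def by blast
  obtain S0 S1 S2 S3 where S: "S1 \<subseteq> carrier H" "S2 \<subseteq> carrier H" "S3 \<subseteq> carrier H"
    and C0123: "C 0 = centraliser H S0" "C 1 = centraliser H S1" "C 2 = centraliser H S2"
      "C 3 = centraliser H S3"
    using C[of 0] C[of 1] C[of 2] C[of 3] by (auto simp: is_centraliser_def)
  have chain': "centraliser H S1 \<subset> centraliser H S0" "centraliser H S2 \<subset> centraliser H S1"
    "centraliser H S3 \<subset> centraliser H S2"
    using chain[of 0] chain[of 1] chain[of 2] unfolding C0123[symmetric] by (simp_all add: numeral_eq_Suc)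
  obtain g where g: "g \<in> centraliser H S0" "g \<notin> centraliser H S1"
    using chain'(1) by blast
  obtain s where "s \<in> S1" "s \<notin> centraliser H (carrier H)"
    using not_in_centraliserE[OF subsetD[OF centraliser_subset_carrier g(1)] g(2)] .
  with S(1) have s: "s \<in> S1" "s \<in> carrier H - centraliser H (carrier H)"
    by auto
  obtain y where y23: "y \<in> centraliser H S2" "y \<notin> centraliser H S3"
    using chain'(3) by blast
  have y1: "y \<in> centraliser H S1"
    using y23(1) chain'(2) by blast
  have yH: "y \<in> carrier H"
    using subsetD[OF centraliser_subset_carrier y1] .
  have "y \<notin> centraliser H (carrier H)"
    using y23(2) centraliser_antimono[OF S(3)] by blast
  with yH have y: "y \<in> carrier H - centraliser H (carrier H)"
    by blast
  have "x \<in> centraliser H S2" if x: "x \<in> centraliser H S1" for x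
  proof -
    have xH: "x \<in> carrier H"
      using subsetD[OF centraliser_subset_carrier x] .
    have "x \<otimes>\<^bsub>H\<^esub> s = s \<otimes>\<^bsub>H\<^esub> x" "s \<otimes>\<^bsub>H\<^esub> y = y \<otimes>\<^bsub>H\<^esub> s"
      using centraliser_commute[OF x s(1)] centraliser_commute[OF y1 s(1)] by simp_all
    then have xy: "x \<otimes>\<^bsub>H\<^esub> y = y \<otimes>\<^bsub>H\<^esub> x"
      using commutative_transitive_mod_centreD[OF CT xH s(2) yH] by blast
    have "x \<otimes>\<^bsub>H\<^esub> u = u \<otimes>\<^bsub>H\<^esub> x" if "u \<in> S2" for u
      using commutative_transitive_mod_centreD[OF CT xH y _ xy centraliser_commute[OF y23(1) that]]
        that S(2) by blast
    then show ?thesis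
      using xH by (simp add: centraliser_def)
  qed
  with chain'(2) show False
    by blast
qed

section \<open>Ping-pong on pairs of polynomials\<close>

text \<open>The conjugate of [[1, 0], [-s, 1]] by [[1, c], [0, 1]]; it fixes the vector (c, 1).\<close>
definition parabolic :: "'r::idom \<Rightarrow> 'r poly \<Rightarrow> 'r poly mat2" where
  "parabolic c s = Mat2 (1 - [:c:] * s) ([:c:] * [:c:] * s) (- s) (1 + [:c:] * s)"

lemma parabolic_add: "parabolic c s * parabolic c s' = parabolic c (s + s')"
  by (simp add: parabolic_def algebra_simps del: mult_pCons_left mult_pCons_right)

lemma parabolic_0 [simp]: "parabolic c 0 = 1"
  by (simp add: parabolic_def one_mat2_def)

text \<open>The pairs (x, y) for which x / y lies at distance less than 1 from c, for the absolute value
on the field of fractions given by the degree.\<close>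
definition in_basin :: "'r::idom \<Rightarrow> 'r poly \<times> 'r poly \<Rightarrow> bool" where
  "in_basin c v \<longleftrightarrow> snd v \<noteq> 0 \<and>
     ([:c:] * snd v - fst v = 0 \<or> degree ([:c:] * snd v - fst v) < degree (snd v))"

lemma in_basin_nonzero: "in_basin c v \<Longrightarrow> v \<noteq> (0, 0)"
  by (auto simp: in_basin_def)

lemma not_in_basin_1_0: "\<not> in_basin c (1, 0)"
  by (simp add: in_basin_def)

lemma basins_disjoint:
  assumes "c \<noteq> c'" "in_basin c v"
  shows "\<not> in_basin c' v"
proof
  assume "in_basin c' v"
  obtain x y where v: "v = (x, y)" by (cases v)
  define d d' where "d = [:c:] * y - x" and "d' = [:c':] * y - x"
  have "y \<noteq> 0" "d = 0 \<or> degree d < degree y" "d' = 0 \<or> degree d' < degree y"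
    using assms(2) \<open>in_basin c' v\<close> by (simp_all add: in_basin_def v d_def d'_def)
  moreover have "d - d' = smult (c - c') y"
    by (simp add: d_def d'_def smult_diff_left)
  ultimately have "d - d' \<noteq> 0" "degree (d - d') = degree y"
    using assms(1) by simp_all
  with \<open>d = 0 \<or> _\<close> \<open>d' = 0 \<or> _\<close> show False
    using degree_diff_le_max[of d d'] by (auto simp: max_def split: if_splits)
qed

lemma parabolic_maps_into_basin:
  assumes "\<not> in_basin c v" "v \<noteq> (0, 0)" "s \<noteq> 0" "coeff s 0 = 0"
  shows "in_basin c (mat2_apply (parabolic c s) v)"
proof -
  obtain x y where v: "v = (x, y)" by (cases v)
  define d where "d = [:c:] * y - x"
  have image: "mat2_apply (parabolic c s) v = (x + [:c:] * s * d, y + s * d)"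
    by (simp add: v parabolic_def d_def algebra_simps del: mult_pCons_left mult_pCons_right)
  have d: "[:c:] * (y + s * d) - (x + [:c:] * s * d) = d"
    by (simp add: d_def algebra_simps del: mult_pCons_left mult_pCons_right)
  have "d \<noteq> 0"
    using assms(1,2) by (auto simp: in_basin_def v d_def)
  moreover have "degree s \<noteq> 0"
    using assms(3,4) by (metis degree_0_id pCons_0_0 coeff_pCons_0)
  ultimately have degree_sd: "degree d < degree (s * d)"
    using assms(3) by (simp add: degree_mult_eq)
  have "y = 0 \<or> degree y \<le> degree d"
    using assms(1) \<open>d \<noteq> 0\<close> by (auto simp: in_basin_def v d_def)
  then have "degree (y + s * d) = degree (s * d)"
    using degree_sd by (auto intro: degree_add_eq_right)
  with degree_sd d show ?thesis
    unfolding image in_basin_def by auto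
qed

section \<open>Graphs in which the middle of every induced path of length 2 is universal\<close>

locale induced_P3_middles_universal =
  fixes V :: "'a set" and E :: "'a \<Rightarrow> 'a \<Rightarrow> bool"
  assumes graph: "fin_simple_graph V E"
    and middle_universal: "\<And>b. induced_P3_middle E b \<Longrightarrow> universal V E b"
begin

lemma adjacent_sym: "E a b \<Longrightarrow> E b a"
  and finite_V: "finite V"
  using graph by (auto simp: fin_simple_graph_def)

definition noncentral :: "'a set" where
  "noncentral = {v \<in> V. \<not> universal V E v}"

lemma adjacent_if_central: "a \<in> V - noncentral \<Longrightarrow> b \<in> V \<Longrightarrow> a \<noteq> b \<Longrightarrow> E a b"
  by (auto simp: noncentral_def universal_def)

lemma noncentral_neighbours_adjacent:
  assumes "b \<in> noncentral" "E a b" "E b c" "a \<noteq> c"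
  shows "E a c"
proof (rule ccontr)
  assume "\<not> E a c"
  with assms(2-4) have "induced_P3_middle E b"
    unfolding induced_P3_middle_def by blast
  with assms(1) show False
    using middle_universal by (simp add: noncentral_def)
qed

definition clique_of :: "'a \<Rightarrow> 'a set" where
  "clique_of v = {w \<in> noncentral. w = v \<or> E v w}"

lemma clique_of_subset_if_adjacent:
  assumes "a \<in> noncentral" "c \<in> noncentral" "E a c"
  shows "clique_of a \<subseteq> clique_of c"
proof
  fix w assume w: "w \<in> clique_of a"
  have "E c a"
    using assms(3) by (rule adjacent_sym)
  then have "w = c \<or> E c w"
    using w noncentral_neighbours_adjacent[OF assms(1), of c w] by (auto simp: clique_of_def)
  with w show "w \<in> clique_of c"
    by (simp add: clique_of_def)
qed

lemma clique_of_eq_if_adjacent: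
  "a \<in> noncentral \<Longrightarrow> c \<in> noncentral \<Longrightarrow> E a c \<Longrightarrow> clique_of a = clique_of c"
  using clique_of_subset_if_adjacent adjacent_sym by (metis subset_antisym)

definition vertex_index :: "'a \<Rightarrow> nat" where
  "vertex_index = to_nat_on V"

text \<open>The non-central vertices fall into pairwise non-adjacent cliques; a vertex is labelled by
the smallest index in its clique.\<close>
definition label :: "'a \<Rightarrow> int" where
  "label v = int (Min (vertex_index ` clique_of v))"

lemma inj_on_vertex_index: "inj_on vertex_index V"
  unfolding vertex_index_def using finite_V by (intro inj_on_to_nat_on countable_finite)

lemma label_attained:
  assumes "v \<in> noncentral"
  obtains w where "w \<in> clique_of v" "int (vertex_index w) = label v"
proof -
  have "finite (clique_of v)" "v \<in> clique_of v"
    using finite_V assms by (auto simp: clique_of_def noncentral_def intro: finite_subset)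
  then have "Min (vertex_index ` clique_of v) \<in> vertex_index ` clique_of v"
    by (intro Min_in) auto
  then show thesis
    using that by (auto simp: label_def)
qed

lemma label_eq_iff:
  assumes a: "a \<in> noncentral" and c: "c \<in> noncentral"
  shows "label a = label c \<longleftrightarrow> a = c \<or> E a c"
proof
  assume "label a = label c"
  obtain wa wc where "wa \<in> clique_of a" "wc \<in> clique_of c" "vertex_index wa = vertex_index wc"
    using label_attained[OF a] label_attained[OF c] \<open>label a = label c\<close> by (metis of_nat_eq_iff)
  moreover have "wa \<in> V" "wc \<in> V"
    using calculation by (auto simp: clique_of_def noncentral_def)
  ultimately have "wa \<in> clique_of a" "wa \<in> clique_of c"
    using inj_on_vertex_index by (auto dest: inj_onD)
  then show "a = c \<or> E a c"
    using noncentral_neighbours_adjacent[of wa a c] adjacent_sym by (auto simp: clique_of_def)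
next
  assume "a = c \<or> E a c"
  then show "label a = label c"
    using clique_of_eq_if_adjacent[OF a c] by (auto simp: label_def)
qed

text \<open>The exponent is shifted by one so that no monomial is constant: a nonzero sum of them then
has positive degree, as ping-pong requires of the parameter of a parabolic matrix.\<close>
definition letter_monom :: "'a \<times> bool \<Rightarrow> int poly" where
  "letter_monom l = (if snd l then 1 else -1) * monom 1 (Suc (vertex_index (fst l)))"

definition letter_rep :: "'a \<times> bool \<Rightarrow> int poly mat2" where
  "letter_rep l = (if fst l \<in> noncentral then parabolic (label (fst l)) (letter_monom l) else 1)"

definition word_rep :: "'a word \<Rightarrow> int poly mat2" where
  "word_rep w = prod_list (map letter_rep w)"

lemma word_rep_Nil [simp]: "word_rep [] = 1"
  by (simp add: word_rep_def)

lemma word_rep_append [simp]: "word_rep (u @ w) = word_rep u * word_rep w"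
  by (simp add: word_rep_def)

lemma word_rep_pc_rel: "(u, v) \<in> pc_rel V E \<Longrightarrow> word_rep u = word_rep v"
  unfolding word_rep_def
proof (rule prod_list_map_pc_rel)
  show "letter_rep (a, e) * letter_rep (a, \<not> e) = 1" for a e
    by (simp add: letter_rep_def letter_monom_def parabolic_add)
  show "letter_rep (a, e) * letter_rep (c, d) = letter_rep (c, d) * letter_rep (a, e)" if "E a c" for a c e d
    using that label_eq_iff[of a c] by (auto simp: letter_rep_def parabolic_add add.commute)
qed

lemma word_rep_central: "fst ` set c \<subseteq> V - noncentral \<Longrightarrow> word_rep c = 1"
  by (induction c) (auto simp: word_rep_def letter_rep_def)

definition exp_poly :: "'a word \<Rightarrow> int poly" where
  "exp_poly w = sum_list (map letter_monom w)"

lemma coeff_exp_poly_0: "coeff (exp_poly w) 0 = 0"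
  by (induction w) (auto simp: exp_poly_def letter_monom_def)

lemma coeff_exp_poly:
  assumes "w \<in> words_on V" "v \<in> V"
  shows "coeff (exp_poly w) (Suc (vertex_index v)) = exp_sum w v"
  using assms(1)
proof (induction w)
  case (Cons l w)
  have "vertex_index (fst l) = vertex_index v \<longleftrightarrow> fst l = v"
    using Cons.prems assms(2) inj_on_vertex_index by (auto dest: inj_onD)
  with Cons show ?case
    by (auto simp: exp_poly_def letter_monom_def exp_sum_Cons)
qed (simp add: exp_poly_def)

lemma exp_poly_nonzero: "w \<in> words_on V \<Longrightarrow> exp_sum w v \<noteq> 0 \<Longrightarrow> exp_poly w \<noteq> 0"
  using exp_sum_nonzero_occurs[of w v] coeff_exp_poly[of w v] by (force simp: words_on_def)

definition syllable :: "int \<Rightarrow> 'a word \<Rightarrow> bool" where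
  "syllable k s \<longleftrightarrow> s \<in> words_on V \<and> (\<forall>l\<in>set s. fst l \<in> noncentral \<and> label (fst l) = k)
     \<and> (\<exists>v. exp_sum s v \<noteq> 0)"

lemma word_rep_syllable:
  "\<forall>l\<in>set s. fst l \<in> noncentral \<and> label (fst l) = k \<Longrightarrow> word_rep s = parabolic k (exp_poly s)"
  by (induction s) (auto simp: word_rep_def exp_poly_def letter_rep_def parabolic_add)

text \<open>The normal form of the free product of the clique subgroups: syllables tagged with their
label, consecutive labels distinct.\<close>
definition reduced :: "(int \<times> 'a word) list \<Rightarrow> bool" where
  "reduced ks \<longleftrightarrow> (\<forall>(k, s)\<in>set ks. syllable k s) \<and> successively (\<lambda>(k, _) (k', _). k \<noteq> k') ks"

abbreviation word_of :: "(int \<times> 'a word) list \<Rightarrow> 'a word" where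
  "word_of ks \<equiv> concat (map snd ks)"

lemma reduced_Cons_iff:
  "reduced ((k, s) # ks) \<longleftrightarrow> syllable k s \<and> (ks = [] \<or> fst (hd ks) \<noteq> k) \<and> reduced ks"
  by (cases ks) (auto simp: reduced_def)

lemma word_of_reduced_in_words_on: "reduced ks \<Longrightarrow> word_of ks \<in> words_on V"
proof (induction ks)
  case (Cons ks1 ks)
  then show ?case
    by (cases ks1) (auto simp: reduced_Cons_iff syllable_def)
qed simp

text \<open>Ping-pong: the syllables act in turn on (1, 0) and each lands in the basin of its label.\<close>
lemma reduced_word_rep_in_basin:
  "reduced ks \<Longrightarrow> ks \<noteq> [] \<Longrightarrow> in_basin (fst (hd ks)) (mat2_apply (word_rep (word_of ks)) (1, 0))"
proof (induction ks)
  case (Cons ks1 ks)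
  obtain k s where ks1: "ks1 = (k, s)" by (cases ks1)
  define v where "v = mat2_apply (word_rep (word_of ks)) (1, 0)"
  have s: "syllable k s" and ks: "ks = [] \<or> fst (hd ks) \<noteq> k" "reduced ks"
    using Cons.prems by (simp_all add: ks1 reduced_Cons_iff)
  have "\<not> in_basin k v \<and> v \<noteq> (0, 0)"
  proof (cases "ks = []")
    case False
    then have "in_basin (fst (hd ks)) v"
      using Cons.IH ks(2) by (simp add: v_def)
    then show ?thesis
      using ks(1) False basins_disjoint in_basin_nonzero by blast
  qed (simp add: v_def not_in_basin_1_0)
  moreover have "word_rep s = parabolic k (exp_poly s)" "exp_poly s \<noteq> 0"
    using s exp_poly_nonzero by (auto simp: syllable_def word_rep_syllable)
  ultimately show ?case
    using parabolic_maps_into_basin[of k v "exp_poly s"] coeff_exp_poly_0[of s]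
    by (simp add: ks1 v_def mat2_apply_mult)
qed simp

lemma reduced_word_rep_neq_1: "reduced ks \<Longrightarrow> ks \<noteq> [] \<Longrightarrow> word_rep (word_of ks) \<noteq> 1"
  using reduced_word_rep_in_basin not_in_basin_1_0 by fastforce

lemma syllable_clique:
  assumes "\<forall>l\<in>set s. fst l \<in> noncentral \<and> label (fst l) = k"
  shows "clique E (fst ` set s)"
  unfolding clique_def
proof (intro ballI)
  fix a b assume "a \<in> fst ` set s" "b \<in> fst ` set s"
  then obtain la lb where "la \<in> set s" "lb \<in> set s" "a = fst la" "b = fst lb"
    by blast
  with assms have "a \<in> noncentral" "b \<in> noncentral" "label a = label b"
    by simp_all
  then show "a = b \<or> E a b"
    using label_eq_iff by blast
qed

lemma reduced_Cons_letter:
  assumes l: "fst l \<in> noncentral" and ks: "reduced ks"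
  shows "\<exists>ks'. reduced ks' \<and> (l # word_of ks, word_of ks') \<in> pc_rel V E"
proof (cases "ks = [] \<or> fst (hd ks) \<noteq> label (fst l)")
  case True
  have "syllable (label (fst l)) [l]"
    using l by (auto simp: syllable_def noncentral_def exp_sum_Cons intro!: exI[of _ "fst l"])
  with True ks have "reduced ((label (fst l), [l]) # ks)"
    by (simp add: reduced_Cons_iff)
  moreover have "l # word_of ks \<in> words_on V"
    using l word_of_reduced_in_words_on[OF ks] by (simp add: noncentral_def)
  ultimately show ?thesis
    by (intro exI[of _ "(label (fst l), [l]) # ks"]) (auto intro: pc_rel_refl)
next
  case False
  then obtain s ks0 where ks_eq: "ks = (label (fst l), s) # ks0"
    by (cases ks) auto
  with ks have s: "syllable (label (fst l)) s" and ks0: "ks0 = [] \<or> fst (hd ks0) \<noteq> label (fst l)" "reduced ks0"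
    by (simp_all add: reduced_Cons_iff)
  have letters: "\<forall>l'\<in>set (l # s). fst l' \<in> noncentral \<and> label (fst l') = label (fst l)"
    and words: "l # s \<in> words_on V" "word_of ks0 \<in> words_on V"
    using s l word_of_reduced_in_words_on[OF ks0(2)] by (auto simp: syllable_def noncentral_def)
  show ?thesis
  proof (cases "\<exists>v. exp_sum (l # s) v \<noteq> 0")
    case True
    then have "reduced ((label (fst l), l # s) # ks0)"
      using letters words ks0 by (simp add: reduced_Cons_iff syllable_def)
    then show ?thesis
      using words ks_eq by (intro exI[of _ "(label (fst l), l # s) # ks0"]) (auto intro: pc_rel_refl)
  next
    case False
    then have "(l # s, []) \<in> pc_rel V E"
      using words letters by (intro pc_rel_Nil_if_clique syllable_clique) auto
    then have "((l # s) @ word_of ks0, [] @ word_of ks0) \<in> pc_rel V E"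
      using words by (intro pc_rel_append pc_rel_refl)
    then show ?thesis
      using ks0 ks_eq by (intro exI[of _ ks0]) auto
  qed
qed

lemma pc_rel_normal_form:
  "w \<in> words_on V \<Longrightarrow> \<exists>c ks. fst ` set c \<subseteq> V - noncentral \<and> reduced ks \<and> (w, c @ word_of ks) \<in> pc_rel V E"
proof (induction w)
  case Nil
  show ?case
    by (intro exI[of _ "[]"]) (auto simp: reduced_def pc_rel_refl)
next
  case (Cons l w)
  then obtain c ks where c: "fst ` set c \<subseteq> V - noncentral" and ks: "reduced ks"
    and rel: "(w, c @ word_of ks) \<in> pc_rel V E"
    by auto
  have words: "fst l \<in> V" "c \<in> words_on V" "word_of ks \<in> words_on V"
    using Cons.prems pc_rel_words_on[OF rel] by auto
  have rel_l: "([l] @ w @ [], [l] @ (c @ word_of ks) @ []) \<in> pc_rel V E"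
    using rel words by (intro pc_rel_append_context) auto
  show ?case
  proof (cases "fst l \<in> noncentral")
    case False
    then show ?thesis
      using rel_l c ks words by (intro exI[of _ "l # c"] exI[of _ ks]) auto
  next
    case True
    have "\<forall>l'\<in>set c. l' = l \<or> E (fst l) (fst l')"
    proof
      fix l' assume "l' \<in> set c"
      then have "fst l' \<in> V - noncentral"
        using c by blast
      with True words(1) have "E (fst l') (fst l)"
        by (intro adjacent_if_central) auto
      then show "l' = l \<or> E (fst l) (fst l')"
        by (simp add: adjacent_sym)
    qed
    then have "([] @ (l # c) @ word_of ks, [] @ (c @ [l]) @ word_of ks) \<in> pc_rel V E"
      using words by (intro pc_rel_append_context pc_rel_move_letter) auto
    then have rel_c: "(l # w, c @ l # word_of ks) \<in> pc_rel V E"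
      using rel_l pc_rel_trans by fastforce
    obtain ks' where ks': "reduced ks'" "(l # word_of ks, word_of ks') \<in> pc_rel V E"
      using reduced_Cons_letter[OF True ks] by blast
    then have "(c @ (l # word_of ks) @ [], c @ word_of ks' @ []) \<in> pc_rel V E"
      using words by (intro pc_rel_append_context) auto
    then have "(l # w, c @ word_of ks') \<in> pc_rel V E"
      using pc_rel_trans[OF rel_c] by simp
    with c ks' show ?thesis
      by blast
  qed
qed

lemma pc_rel_Nil_if_word_rep_1:
  assumes w: "w \<in> words_on V" and "\<forall>a. exp_sum w a = 0" and "word_rep w = 1"
  shows "(w, []) \<in> pc_rel V E"
proof -
  obtain c ks where c: "fst ` set c \<subseteq> V - noncentral" and ks: "reduced ks"
    and rel: "(w, c @ word_of ks) \<in> pc_rel V E"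
    using pc_rel_normal_form[OF w] by blast
  have "word_rep (word_of ks) = 1"
    using word_rep_pc_rel[OF rel] word_rep_central[OF c] assms(3) by simp
  then have "ks = []"
    using reduced_word_rep_neq_1[OF ks] by blast
  then have rel_c: "(w, c) \<in> pc_rel V E"
    using rel by simp
  moreover have "(c, []) \<in> pc_rel V E"
  proof (rule pc_rel_Nil_if_clique)
    show "c \<in> words_on V"
      using c by (auto simp: words_on_def)
    show "clique E (fst ` set c)"
      unfolding clique_def using c adjacent_if_central by blast
    show "\<forall>a. exp_sum c a = 0"
      using exp_sum_pc_rel[OF rel_c] assms(2) by metis
  qed
  ultimately show ?thesis
    by (rule pc_rel_trans)
qed

text \<open>The representation kills the central generators; the exponent sums recover them.\<close>
lemma pc_rel_if_word_rep_eq: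
  assumes u: "u \<in> words_on V" and v: "v \<in> words_on V"
    and "exp_sum u = exp_sum v" and "word_rep u = word_rep v"
  shows "(u, v) \<in> pc_rel V E"
proof -
  have "word_rep (v @ word_inv v) = 1"
    using word_rep_pc_rel[OF pc_rel_append_word_inv[OF v]] by (simp add: word_rep_def)
  then have "(u @ word_inv v, []) \<in> pc_rel V E"
    using assms word_inv_words_on[OF v]
    by (intro pc_rel_Nil_if_word_rep_1) (auto simp: exp_sum_append exp_sum_word_inv)
  then have "((u @ word_inv v) @ v, [] @ v) \<in> pc_rel V E"
    using v by (intro pc_rel_append pc_rel_refl)
  moreover have "(u @ (word_inv v @ v), u @ []) \<in> pc_rel V E"
    using u v by (intro pc_rel_append pc_rel_refl pc_rel_word_inv_append)
  ultimately show ?thesis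
    using pc_rel_sym pc_rel_trans by (metis append_assoc append_Nil append_Nil2)
qed

lemma pc_class_commute_iff_word_rep_commute:
  assumes "u \<in> words_on V" "v \<in> words_on V"
  shows "pc_class V E u \<otimes>\<^bsub>pc_group V E\<^esub> pc_class V E v = pc_class V E v \<otimes>\<^bsub>pc_group V E\<^esub> pc_class V E u
     \<longleftrightarrow> word_rep u * word_rep v = word_rep v * word_rep u"
  using assms word_rep_pc_rel[of "u @ v" "v @ u"]
  by (auto simp: pc_class_commute_iff exp_sum_append fun_eq_iff intro: pc_rel_if_word_rep_eq)

text \<open>A non-central element is represented by a non-scalar matrix, so commutative transitivity
of 2 x 2 matrices over a domain applies.\<close>
lemma commutative_transitive: "commutative_transitive_mod_centre (pc_group V E)"
  unfolding commutative_transitive_mod_centre_def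
proof (intro ballI impI)
  let ?H = "pc_group V E"
  fix X Y Z
  assume X: "X \<in> carrier ?H" and Y: "Y \<in> carrier ?H - centraliser ?H (carrier ?H)" and Z: "Z \<in> carrier ?H"
    and XY: "X \<otimes>\<^bsub>?H\<^esub> Y = Y \<otimes>\<^bsub>?H\<^esub> X" and YZ: "Y \<otimes>\<^bsub>?H\<^esub> Z = Z \<otimes>\<^bsub>?H\<^esub> Y"
  obtain x y z where words: "x \<in> words_on V" "y \<in> words_on V" "z \<in> words_on V"
    and classes: "X = pc_class V E x" "Y = pc_class V E y" "Z = pc_class V E z"
    using X Y Z by (metis Diff_iff pc_group_carrierE)
  have "traceless_part (word_rep y) \<noteq> (0, 0, 0)"
  proof
    assume "traceless_part (word_rep y) = (0, 0, 0)"
    then have "Y \<otimes>\<^bsub>?H\<^esub> G = G \<otimes>\<^bsub>?H\<^esub> Y" if "G \<in> carrier ?H" for G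
      using that words(2) classes(2) pc_class_commute_iff_word_rep_commute
      by (metis mat2_commute_iff pc_group_carrierE proportional_zero)
    with Y show False
      by (simp add: centraliser_def)
  qed
  moreover have "word_rep x * word_rep y = word_rep y * word_rep x"
    "word_rep y * word_rep z = word_rep z * word_rep y"
    using XY YZ words classes pc_class_commute_iff_word_rep_commute by simp_all
  ultimately have "word_rep x * word_rep z = word_rep z * word_rep x"
    using mat2_commute_trans by blast
  then show "X \<otimes>\<^bsub>?H\<^esub> Z = Z \<otimes>\<^bsub>?H\<^esub> X"
    using words classes pc_class_commute_iff_word_rep_commute by simp
qed

end

theorem mainTheorem13:
  fixes V :: "'a set" and E :: "'a \<Rightarrow> 'a \<Rightarrow> bool"
  assumes "fin_simple_graph V E"
  shows "\<not> cdim_eq (pc_group V E) 3"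
proof (cases "\<exists>b. induced_P3_middle E b \<and> \<not> universal V E b")
  case True
  then have "has_centraliser_chain (pc_group V E) 4"
    using has_centraliser_chain_4[OF assms] by blast
  then show ?thesis
    by (auto simp: cdim_eq_def)
next
  case False
  then interpret induced_P3_middles_universal V E
    using assms by unfold_locales auto
  show ?thesis
    using no_centraliser_chain_3[OF commutative_transitive] by (simp add: cdim_eq_def)
qed

end
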